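(* Assume the labeled data contain at least one point with $y_i=1$ and at least one with $y_i=-1$, $\tau\in\{0,\dots,m\}$, and let $M_0$ be the valid big-$M$ $M_0:=2\sqrt{2(2C_1\bar n+C_2(m-\tau))}\max_{i}\|x^i\|+1$ with $\bar n:=|\{i\in[1,n]:y_i=-1\}|$. Let $(\bar\omega,\bar b,\bar\xi,\bar\eta,\bar z)$ be a feasible point of (P3) (with constant $M_0$) with objective value $\bar f$, and let $(\omega^*,b^*,\xi^*,\eta^*,z^* )$ be an optimal solution of (P3) (with constant $M_0$) with optimal value $f^*$. Let $P_u:=\{i\in[n+1,N]:(\omega^* )^\top x^i+b^*>0\}$, $N_u:=\{i\in[n+1,N]:(\omega^* )^\top x^i+b^*<0\}$, let $S_p\subseteq P_u$, $S_n\subseteq N_u$ be arbitrary, and let $s\in[n+1,N]\setminus(S_p\cup S_n)$ with $\bar\omega^\top x^s+\bar b<0$. Consider Problem (P5) with constant $M:=2\sqrt{2\bar f}\max_{i\in[1,N]}\|x^i\|+1$. Then: (a) the objective value $\tilde f$ of any feasible point of (P5) satisfies $f^*\le\tilde f$; (b) if $\tilde f$ is the optimal value of (P5) and $\bar f<\tilde f$, then $(\omega^* )^\top x^s+b^*<0$, i.e., $s\in N_u$.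
   Context: Data: points $x^1,\dots,x^N\in\mathbb{R}^d$; the first $n$ are labeled with $y_i\in\{-1,1\}$, the remaining $m:=N-n$ points are unlabeled; $[a,b]=\{a,\dots,b\}$; Euclidean norm. Parameters $C_1,C_2>0$, integer $\tau$. Objective $F(\omega,\xi,\eta):=\tfrac12\|\omega\|^2+C_1\sum_{i=1}^n\xi_i+C_2(\eta_1+\eta_2)$. Problem (P3) with constant $M$: minimize $F$ over $\omega\in\mathbb{R}^d,b\in\mathbb{R},\xi\in\mathbb{R}^n,\eta\in\mathbb{R}^2$, $z_i\in\{0,1\}$ ($i\in[n+1,N]$) subject to $y_i(\omega^\top x^i+b)\ge1-\xi_i$ ($i\in[1,n]$); $-(1-z_i)M\le\omega^\top x^i+b\le z_iM$ ($i\in[n+1,N]$); $\tau-\eta_1\le\sum_{i=n+1}^Nz_i\le\tau+\eta_2$; $\xi\ge0$; $\eta\ge0$. Problem (P5) (for given $S_p,S_n,s$ and constant $M$): minimize $F$ over $\omega,b,\xi,\eta$ and $z_i\in\{0,1\}$ for $i\in[n+1,N]\setminus(S_p\cup S_n)$, subject to $y_i(\omega^\top x^i+b)\ge1-\xi_i$ ($i\in[1,n]$); $-(1-z_i)M\le\omega^\top x^i+b\le z_iM$ for $i\in[n+1,N]\setminus(\{s\}\cup S_p\cup S_n)$; $\omega^\top x^i+b\ge0$ for $i\in S_p$; $\omega^\top x^i+b\le0$ for $i\in S_n$; $0\le\omega^\top x^s+b\le z_sM$; $\tau-\eta_1\le|S_p|+\sum_{i\in[n+1,N]\setminus(S_p\cup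 S_n)}z_i\le\tau+\eta_2$; $\xi_i\ge0$ ($i\in[1,n]$); $\eta_1,\eta_2\ge0$. *)

theory Defs
  imports "HOL-Analysis.Analysis"
begin

text \<open>Data: points x i in real^'d for i in {1..N}; the first n are labeled with y i in {-1,1}.
  Variables: omega (w), b, xi (indexed by {1..n}), eta = (e1, e2), z (binary, indexed by {n+1..N}).\<close>

definition obj :: "real \<Rightarrow> real \<Rightarrow> nat \<Rightarrow> real^'d \<Rightarrow> (nat \<Rightarrow> real) \<Rightarrow> real \<Rightarrow> real \<Rightarrow> real" where
  "obj C1 C2 n w xi e1 e2 = (1/2) * (norm w)^2 + C1 * (\<Sum>i=1..n. xi i) + C2 * (e1 + e2)"

definition P3_feas ::
  "(nat \<Rightarrow> real^'d) \<Rightarrow> (nat \<Rightarrow> real) \<Rightarrow> nat \<Rightarrow> nat \<Rightarrow> nat \<Rightarrow> real \<Rightarrow>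
   real^'d \<Rightarrow> real \<Rightarrow> (nat \<Rightarrow> real) \<Rightarrow> real \<Rightarrow> real \<Rightarrow> (nat \<Rightarrow> real) \<Rightarrow> bool" where
  "P3_feas x y n N tau M w b xi e1 e2 z \<longleftrightarrow>
     (\<forall>i\<in>{1..n}. y i * (inner w (x i) + b) \<ge> 1 - xi i) \<and>
     (\<forall>i\<in>{n+1..N}. z i \<in> {0, 1} \<and>
        - (1 - z i) * M \<le> inner w (x i) + b \<and> inner w (x i) + b \<le> z i * M) \<and>
     real tau - e1 \<le> (\<Sum>i=n+1..N. z i) \<and> (\<Sum>i=n+1..N. z i) \<le> real tau + e2 \<and>
     (\<forall>i\<in>{1..n}. xi i \<ge> 0) \<and> e1 \<ge> 0 \<and> e2 \<ge> 0"

text \<open>Feasibility for (P5) with sets Sp, Sn, index s and big-M constant M.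
  z is only a variable on {n+1..N} - (Sp \<union> Sn); its other values are irrelevant.\<close>
definition P5_feas ::
  "(nat \<Rightarrow> real^'d) \<Rightarrow> (nat \<Rightarrow> real) \<Rightarrow> nat \<Rightarrow> nat \<Rightarrow> nat \<Rightarrow> real \<Rightarrow> nat set \<Rightarrow> nat set \<Rightarrow> nat \<Rightarrow>
   real^'d \<Rightarrow> real \<Rightarrow> (nat \<Rightarrow> real) \<Rightarrow> real \<Rightarrow> real \<Rightarrow> (nat \<Rightarrow> real) \<Rightarrow> bool" where
  "P5_feas x y n N tau M Sp Sn s w b xi e1 e2 z \<longleftrightarrow>
     (\<forall>i\<in>{1..n}. y i * (inner w (x i) + b) \<ge> 1 - xi i) \<and>
     (\<forall>i\<in>{n+1..N} - (Sp \<union> Sn). z i \<in> {0, 1}) \<and>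
     (\<forall>i\<in>{n+1..N} - ({s} \<union> Sp \<union> Sn).
        - (1 - z i) * M \<le> inner w (x i) + b \<and> inner w (x i) + b \<le> z i * M) \<and>
     (\<forall>i\<in>Sp. inner w (x i) + b \<ge> 0) \<and>
     (\<forall>i\<in>Sn. inner w (x i) + b \<le> 0) \<and>
     0 \<le> inner w (x s) + b \<and> inner w (x s) + b \<le> z s * M \<and>
     real tau - e1 \<le> real (card Sp) + (\<Sum>i\<in>{n+1..N} - (Sp \<union> Sn). z i) \<and>
     real (card Sp) + (\<Sum>i\<in>{n+1..N} - (Sp \<union> Sn). z i) \<le> real tau + e2 \<and>
     (\<forall>i\<in>{1..n}. xi i \<ge> 0) \<and> e1 \<ge> 0 \<and> e2 \<ge> 0"

end

theory Submission
  imports Defs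
begin

text \<open>
  If a point has objective value at most \<open>F\<close>, then \<open>\<parallel>w\<parallel> \<le> \<surd>(2F)\<close>, so \<open>\<bar>w\<bullet>x\<^sub>i\<bar> \<le> \<surd>(2F) R\<close>
  with \<open>R = max\<^sub>i \<parallel>x\<^sub>i\<parallel>\<close>. Clamping the bias into \<open>[-K, K]\<close>, \<open>K = \<surd>(2F) R + 1\<close>, keeps every
  point on its (closed) side of the hyperplane, bounds all values \<open>\<bar>w\<bullet>x\<^sub>i + b\<bar>\<close> by \<open>2K - 1\<close>,
  and does not increase the total slack; since both labels occur, it strictly decreases the
  slack whenever the bias actually moves.

  (a) A feasible point of (P5) with value at most \<open>F\<^sub>0\<close> (the value of the point \<open>w = 0, b = 1\<close>,
  which bounds \<open>f*\<close>) becomes, after clamping and setting \<open>z = 1\<close> on \<open>S\<^sub>p\<close> and \<open>z = 0\<close>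
  on \<open>S\<^sub>n\<close>, a feasible point of (P3) with constant \<open>M\<^sub>0\<close> and no larger value.
  (b) The optimum of (P3) is invariant under clamping, hence
  \<open>\<bar>w*\<bullet>x\<^sub>i + b*\<bar> \<le> 2\<surd>(2f*) R + 1 \<le> M\<close>; if \<open>w*\<bullet>x\<^sub>s + b* \<ge> 0\<close>, the optimum is feasible
  for (P5), giving \<open>f\<^sup>~ \<le> f* \<le> f\<^sup>- < f\<^sup>~\<close>.
\<close>

lemma bigM_iff_sign:
  fixes z v M :: real
  assumes "z \<in> {0, 1}"
  shows "(- (1 - z) * M \<le> v \<and> v \<le> z * M) \<longleftrightarrow>
           (z = 1 \<longrightarrow> 0 \<le> v \<and> v \<le> M) \<and> (z = 0 \<longrightarrow> - M \<le> v \<and> v \<le> 0)"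
  using assms by auto

text \<open>Moving the bias from \<open>b\<close> to \<open>b'\<close> raises the margin of point \<open>i\<close> by \<open>y\<^sub>i (b' - b)\<close>;
  the slack \<open>max 0 (y\<^sub>i (b' - b))\<close> freed in this way is removed.\<close>

lemma clamp_margin:
  fixes y v b xi K :: real
  defines "b' \<equiv> max (- K) (min K b)"
  assumes "y \<in> {-1, 1}" "\<bar>v\<bar> \<le> K - 1" "y * (v + b) \<ge> 1 - xi" "0 \<le> xi"
  shows "y * (v + b') \<ge> 1 - (xi - max 0 (y * (b' - b)))" "0 \<le> xi - max 0 (y * (b' - b))"
  using assms by (auto simp: abs_le_iff max_def min_def)

lemma clamp_keeps_side:
  fixes v b K :: real
  defines "b' \<equiv> max (- K) (min K b)"
  assumes "\<bar>v\<bar> \<le> K - 1"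
  shows "0 \<le> v + b \<Longrightarrow> 0 \<le> v + b'" "v + b \<le> 0 \<Longrightarrow> v + b' \<le> 0" "\<bar>v + b'\<bar> \<le> 2 * K - 1"
  using assms by (auto simp: abs_le_iff max_def min_def)

lemma norm_le_sqrt_obj:
  fixes w :: "real^'d"
  assumes "0 \<le> C1" "0 \<le> C2" "\<forall>i\<in>{1..n}. 0 \<le> xi i" "0 \<le> e1" "0 \<le> e2"
  shows "norm w \<le> sqrt (2 * obj C1 C2 n w xi e1 e2)"
proof (rule real_le_rsqrt)
  have "0 \<le> C1 * (\<Sum>i=1..n. xi i)" using assms(1,3) by (intro mult_nonneg_nonneg sum_nonneg) auto
  moreover have "0 \<le> C2 * (e1 + e2)" using assms(2,4,5) by simp
  ultimately show "(norm w)\<^sup>2 \<le> 2 * obj C1 C2 n w xi e1 e2" by (simp add: obj_def)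
qed

lemma obj_mono_slack:
  assumes "0 \<le> C1" "(\<Sum>i=1..n. xi' i) \<le> (\<Sum>i=1..n. xi i)"
  shows "obj C1 C2 n w xi' e1 e2 \<le> obj C1 C2 n w xi e1 e2"
  using assms by (simp add: obj_def mult_left_mono)

lemma obj_strict_mono_slack:
  assumes "0 < C1" "(\<Sum>i=1..n. xi' i) < (\<Sum>i=1..n. xi i)"
  shows "obj C1 C2 n w xi' e1 e2 < obj C1 C2 n w xi e1 e2"
  using assms by (simp add: obj_def)

lemma sum_eq_card_plus_sum_diff:
  fixes f :: "'a \<Rightarrow> real"
  assumes "finite A" "P \<subseteq> A" "Q \<subseteq> A" "P \<inter> Q = {}" "\<forall>i\<in>P. f i = 1" "\<forall>i\<in>Q. f i = 0"
  shows "sum f A = real (card P) + sum f (A - (P \<union> Q))"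
proof -
  have fin: "finite P" "finite Q" using assms(1-3) finite_subset by blast+
  have "sum f A = sum f P + sum f Q + sum f (A - (P \<union> Q))"
    using sum.subset_diff[of "P \<union> Q" A f] sum.union_disjoint[OF fin assms(4)] assms(1-3) by auto
  then show ?thesis using assms(5,6) by simp
qed

text \<open>The sign information of the big-M constraints, without their magnitude bound.\<close>

definition encodes_sides ::
  "(nat \<Rightarrow> real^'d) \<Rightarrow> nat set \<Rightarrow> real^'d \<Rightarrow> real \<Rightarrow> (nat \<Rightarrow> real) \<Rightarrow> bool" where
  "encodes_sides x U w b z \<longleftrightarrow>
     (\<forall>i\<in>U. z i \<in> {0, 1} \<and> (z i = 1 \<longrightarrow> 0 \<le> inner w (x i) + b) \<and> (z i = 0 \<longrightarrow> inner w (x i) + b \<le> 0))"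

lemma P3_feas_encodes_sides:
  "P3_feas x y n N tau M w b xi e1 e2 z \<Longrightarrow> encodes_sides x {n+1..N} w b z"
  unfolding P3_feas_def encodes_sides_def by auto

lemma P5_feas_completion:
  fixes w :: "real^'d" and Sp Sn :: "nat set" and z :: "nat \<Rightarrow> real"
  defines "z' \<equiv> \<lambda>i. if i \<in> Sp then 1 else if i \<in> Sn then 0 else z i"
  assumes P5: "P5_feas x y n N tau M Sp Sn s w b xi e1 e2 z"
    and S: "Sp \<subseteq> {n+1..N}" "Sn \<subseteq> {n+1..N}" "Sp \<inter> Sn = {}"
  shows "encodes_sides x {n+1..N} w b z'"
    and "real tau - e1 \<le> (\<Sum>i=n+1..N. z' i)" "(\<Sum>i=n+1..N. z' i) \<le> real tau + e2"
proof -
  note P5u = P5[unfolded P5_feas_def]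
  show "encodes_sides x {n+1..N} w b z'"
    unfolding encodes_sides_def
  proof
    fix i assume i: "i \<in> {n+1..N}"
    show "z' i \<in> {0, 1} \<and> (z' i = 1 \<longrightarrow> 0 \<le> inner w (x i) + b) \<and> (z' i = 0 \<longrightarrow> inner w (x i) + b \<le> 0)"
    proof (cases "i \<in> Sp \<union> Sn")
      case True
      then show ?thesis using P5u S(3) unfolding z'_def by auto
    next
      case False
      show ?thesis
      proof (cases "i = s")
        case True
        with False i show ?thesis using P5u unfolding z'_def by auto
      next
        case i_ne_s: False
        with False i have "z i \<in> {0, 1}" "- (1 - z i) * M \<le> inner w (x i) + b \<and> inner w (x i) + b \<le> z i * M"
          using P5u by auto
        with False show ?thesis unfolding z'_def by auto
      qed
    qed
  qed
  have "(\<Sum>i=n+1..N. z' i) = real (card Sp) + (\<Sum>i\<in>{n+1..N} - (Sp \<union> Sn). z' i)"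
    using S by (intro sum_eq_card_plus_sum_diff) (auto simp: z'_def)
  also have "(\<Sum>i\<in>{n+1..N} - (Sp \<union> Sn). z' i) = (\<Sum>i\<in>{n+1..N} - (Sp \<union> Sn). z i)"
    by (intro sum.cong) (auto simp: z'_def)
  finally show "real tau - e1 \<le> (\<Sum>i=n+1..N. z' i)" "(\<Sum>i=n+1..N. z' i) \<le> real tau + e2"
    using P5u by auto
qed

lemma P5_feas_of_P3_feas:
  assumes feas: "P3_feas x y n N tau M0 w b xi e1 e2 z"
    and Sp: "Sp \<subseteq> {i\<in>{n+1..N}. 0 < inner w (x i) + b}"
    and Sn: "Sn \<subseteq> {i\<in>{n+1..N}. inner w (x i) + b < 0}"
    and s: "s \<in> {n+1..N}" "0 \<le> inner w (x s) + b"
    and bounded: "\<forall>i\<in>{n+1..N}. \<bar>inner w (x i) + b\<bar> \<le> M"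
  shows "P5_feas x y n N tau M Sp Sn s w b xi e1 e2 z"
proof -
  have sides: "encodes_sides x {n+1..N} w b z" using P3_feas_encodes_sides[OF feas] .
  have "z i = 1" if "i \<in> Sp" for i
    using sides Sp that unfolding encodes_sides_def by fastforce
  moreover have "z i = 0" if "i \<in> Sn" for i
    using sides Sn that unfolding encodes_sides_def by fastforce
  ultimately have count: "(\<Sum>i=n+1..N. z i) = real (card Sp) + (\<Sum>i\<in>{n+1..N} - (Sp \<union> Sn). z i)"
    using Sp Sn by (intro sum_eq_card_plus_sum_diff) force+
  have bigM: "\<forall>i\<in>{n+1..N}. - (1 - z i) * M \<le> inner w (x i) + b \<and> inner w (x i) + b \<le> z i * M"
  proof
    fix i assume i: "i \<in> {n+1..N}"
    then have "z i \<in> {0, 1}" "z i = 1 \<longrightarrow> 0 \<le> inner w (x i) + b" "z i = 0 \<longrightarrow> inner w (x i) + b \<le> 0"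
        "\<bar>inner w (x i) + b\<bar> \<le> M"
      using sides bounded unfolding encodes_sides_def by auto
    then show "- (1 - z i) * M \<le> inner w (x i) + b \<and> inner w (x i) + b \<le> z i * M"
      by (subst bigM_iff_sign) auto
  qed
  have "\<forall>i\<in>Sp. 0 \<le> inner w (x i) + b" "\<forall>i\<in>Sn. inner w (x i) + b \<le> 0"
    using Sp Sn by fastforce+
  moreover have "inner w (x s) + b \<le> z s * M" using bigM s(1) by blast
  moreover have "\<forall>i\<in>{n+1..N} - (Sp \<union> Sn). z i \<in> {0, 1}"
    using sides unfolding encodes_sides_def by blast
  moreover have "\<forall>i\<in>{n+1..N} - ({s} \<union> Sp \<union> Sn).
      - (1 - z i) * M \<le> inner w (x i) + b \<and> inner w (x i) + b \<le> z i * M"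
    using bigM by blast
  ultimately show ?thesis
    using feas s(2) unfolding P5_feas_def P3_feas_def count by blast
qed

locale labeled_data =
  fixes x :: "nat \<Rightarrow> real^'d" and y :: "nat \<Rightarrow> real" and n N :: nat
  assumes n_le_N: "n \<le> N"
    and labels: "\<forall>i\<in>{1..n}. y i \<in> {-1, 1}"
    and has_pos: "\<exists>i\<in>{1..n}. y i = 1"
    and has_neg: "\<exists>i\<in>{1..n}. y i = -1"
begin

definition radius :: real where
  "radius = Max ((\<lambda>i. norm (x i)) ` {1..N})"

lemma norm_le_radius: "i \<in> {1..N} \<Longrightarrow> norm (x i) \<le> radius"
  unfolding radius_def by (simp add: Max_ge)

lemma radius_nonneg: "0 \<le> radius"
proof -
  have "1 \<in> {1..N}" using has_pos n_le_N by auto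
  then show ?thesis using norm_le_radius norm_ge_zero order_trans by blast
qed

lemma inner_le_radius:
  assumes "norm w \<le> r" "i \<in> {1..N}"
  shows "\<bar>inner w (x i)\<bar> \<le> r * radius"
proof -
  have "\<bar>inner w (x i)\<bar> \<le> norm w * norm (x i)" by (rule Cauchy_Schwarz_ineq2)
  also have "\<dots> \<le> r * radius"
    using assms norm_le_radius by (intro mult_mono) (auto intro: order_trans[OF norm_ge_zero])
  finally show ?thesis .
qed

lemma slack_shift_sum_le:
  "(\<Sum>i=1..n. xi i - max 0 (y i * d)) \<le> (\<Sum>i=1..n. xi i)"
  by (intro sum_mono) simp

lemma slack_shift_sum_less:
  assumes "d \<noteq> 0"
  shows "(\<Sum>i=1..n. xi i - max 0 (y i * d)) < (\<Sum>i=1..n. xi i)"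
proof -
  obtain j where "j \<in> {1..n}" "0 < y j * d"
    using has_pos has_neg assms by (cases "0 < d") (force simp: mult_less_0_iff)+
  then show ?thesis by (intro sum_strict_mono_ex1) (auto intro: bexI[of _ j])
qed

lemma P3_feas_clamp_bias:
  fixes w :: "real^'d" and b K :: real
  defines "b' \<equiv> max (- K) (min K b)"
  assumes margins: "\<forall>i\<in>{1..n}. y i * (inner w (x i) + b) \<ge> 1 - xi i"
    and slack: "\<forall>i\<in>{1..n}. 0 \<le> xi i" and e: "0 \<le> e1" "0 \<le> e2"
    and sides: "encodes_sides x {n+1..N} w b z"
    and count: "real tau - e1 \<le> (\<Sum>i=n+1..N. z i)" "(\<Sum>i=n+1..N. z i) \<le> real tau + e2"
    and small: "\<forall>i\<in>{1..N}. \<bar>inner w (x i)\<bar> \<le> K - 1"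
    and M: "2 * K - 1 \<le> M"
  shows "P3_feas x y n N tau M w b' (\<lambda>i. xi i - max 0 (y i * (b' - b))) e1 e2 z"
proof -
  have "\<forall>i\<in>{1..n}. y i * (inner w (x i) + b') \<ge> 1 - (xi i - max 0 (y i * (b' - b)))
                   \<and> 0 \<le> xi i - max 0 (y i * (b' - b))"
  proof
    fix i assume i: "i \<in> {1..n}"
    then have "\<bar>inner w (x i)\<bar> \<le> K - 1" using small n_le_N by auto
    with i margins slack labels show "y i * (inner w (x i) + b') \<ge> 1 - (xi i - max 0 (y i * (b' - b)))
                   \<and> 0 \<le> xi i - max 0 (y i * (b' - b))"
      unfolding b'_def using clamp_margin by blast
  qed
  moreover have "\<forall>i\<in>{n+1..N}. z i \<in> {0, 1} \<and>
      - (1 - z i) * M \<le> inner w (x i) + b' \<and> inner w (x i) + b' \<le> z i * M"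
  proof
    fix i assume i: "i \<in> {n+1..N}"
    then have small_i: "\<bar>inner w (x i)\<bar> \<le> K - 1" using small by auto
    have "z i \<in> {0, 1}" "z i = 1 \<longrightarrow> 0 \<le> inner w (x i) + b" "z i = 0 \<longrightarrow> inner w (x i) + b \<le> 0"
      using sides i unfolding encodes_sides_def by auto
    with clamp_keeps_side[OF small_i, of b] M show "z i \<in> {0, 1} \<and>
        - (1 - z i) * M \<le> inner w (x i) + b' \<and> inner w (x i) + b' \<le> z i * M"
      unfolding b'_def by (auto simp: abs_le_iff)
  qed
  ultimately show ?thesis unfolding P3_feas_def using e count by auto
qed

lemma P3_optimum_le_reference_value:
  assumes "tau \<le> N - n" "1 \<le> M0"
    and opt: "\<forall>w b xi e1 e2 z. P3_feas x y n N tau M0 w b xi e1 e2 z \<longrightarrow> f \<le> obj C1 C2 n w xi e1 e2"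
  shows "f \<le> 2 * C1 * real (card {i\<in>{1..n}. y i = -1}) + C2 * (real (N - n) - real tau)"
proof -
  define xi where "xi = (\<lambda>i. if y i = -1 then 2 else 0 :: real)"
  have "P3_feas x y n N tau M0 0 1 xi 0 (real (N - n) - real tau) (\<lambda>_. 1)"
    using assms(1,2) labels unfolding P3_feas_def xi_def by auto
  then have "f \<le> obj C1 C2 n (0 :: real^'d) xi 0 (real (N - n) - real tau)" using opt by blast
  moreover have "(\<Sum>i=1..n. xi i) = (\<Sum>i\<in>{i\<in>{1..n}. y i = -1}. 2)"
    unfolding xi_def by (rule sum.inter_filter[symmetric]) simp
  ultimately show ?thesis by (simp add: obj_def)
qed

lemma P3_optimum_le_P5_value:
  assumes C: "0 \<le> C1" "0 \<le> C2"
    and opt: "\<forall>w b xi e1 e2 z. P3_feas x y n N tau M0 w b xi e1 e2 z \<longrightarrow> f \<le> obj C1 C2 n w xi e1 e2"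
    and f_le: "f \<le> F" and M0: "2 * sqrt (2 * F) * radius + 1 \<le> M0"
    and S: "Sp \<subseteq> {n+1..N}" "Sn \<subseteq> {n+1..N}" "Sp \<inter> Sn = {}"
    and P5: "P5_feas x y n N tau M Sp Sn s w b xi e1 e2 z"
  shows "f \<le> obj C1 C2 n w xi e1 e2"
proof (cases "obj C1 C2 n w xi e1 e2 \<le> F")
  case False
  with f_le show ?thesis by simp
next
  case True
  note P5u = P5[unfolded P5_feas_def]
  define K where "K = sqrt (2 * F) * radius + 1"
  define z' where "z' = (\<lambda>i. if i \<in> Sp then 1 else if i \<in> Sn then 0 else z i)"
  define b' where "b' = max (- K) (min K b)"
  have "norm w \<le> sqrt (2 * obj C1 C2 n w xi e1 e2)" using C P5u by (intro norm_le_sqrt_obj) auto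
  also have "\<dots> \<le> sqrt (2 * F)" using True by simp
  finally have small: "\<forall>i\<in>{1..N}. \<bar>inner w (x i)\<bar> \<le> K - 1"
    unfolding K_def using inner_le_radius by simp
  have sides: "encodes_sides x {n+1..N} w b z'"
    and count: "real tau - e1 \<le> (\<Sum>i=n+1..N. z' i)" "(\<Sum>i=n+1..N. z' i) \<le> real tau + e2"
    using P5_feas_completion[OF P5 S] unfolding z'_def by auto
  have "P3_feas x y n N tau M0 w b' (\<lambda>i. xi i - max 0 (y i * (b' - b))) e1 e2 z'"
    unfolding b'_def using P5u sides count small M0 K_def
    by (intro P3_feas_clamp_bias) simp_all
  then have "f \<le> obj C1 C2 n w (\<lambda>i. xi i - max 0 (y i * (b' - b))) e1 e2" using opt by blast
  also have "\<dots> \<le> obj C1 C2 n w xi e1 e2" using C by (intro obj_mono_slack slack_shift_sum_le)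
  finally show ?thesis .
qed

lemma P3_optimum_bias_bounded:
  assumes C1: "0 < C1"
    and feas: "P3_feas x y n N tau M0 w b xi e1 e2 z"
    and opt: "\<forall>w' b' xi' e1' e2' z'. P3_feas x y n N tau M0 w' b' xi' e1' e2' z' \<longrightarrow>
                obj C1 C2 n w xi e1 e2 \<le> obj C1 C2 n w' xi' e1' e2'"
    and r: "norm w \<le> r" and M0: "2 * r * radius + 1 \<le> M0"
  shows "\<forall>i\<in>{1..N}. \<bar>inner w (x i) + b\<bar> \<le> 2 * r * radius + 1"
proof -
  define K where "K = r * radius + 1"
  define b' where "b' = max (- K) (min K b)"
  define xi' where "xi' = (\<lambda>i. xi i - max 0 (y i * (b' - b)))"
  have small: "\<forall>i\<in>{1..N}. \<bar>inner w (x i)\<bar> \<le> K - 1"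
    unfolding K_def using inner_le_radius r by simp
  note F = feas[unfolded P3_feas_def]
  have "P3_feas x y n N tau M0 w b' xi' e1 e2 z"
    unfolding b'_def xi'_def using F P3_feas_encodes_sides[OF feas] small M0 K_def
    by (intro P3_feas_clamp_bias) simp_all
  then have le: "obj C1 C2 n w xi e1 e2 \<le> obj C1 C2 n w xi' e1 e2" using opt by blast
  have "b' = b"
  proof (rule ccontr)
    assume "b' \<noteq> b"
    then have "obj C1 C2 n w xi' e1 e2 < obj C1 C2 n w xi e1 e2"
      unfolding xi'_def using C1 by (intro obj_strict_mono_slack slack_shift_sum_less) simp_all
    with le show False by simp
  qed
  show ?thesis
  proof
    fix i assume "i \<in> {1..N}"
    then have "\<bar>inner w (x i) + b'\<bar> \<le> 2 * K - 1"
      using small clamp_keeps_side(3) unfolding b'_def by blast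
    then show "\<bar>inner w (x i) + b\<bar> \<le> 2 * r * radius + 1"
      using \<open>b' = b\<close> by (simp add: K_def algebra_simps)
  qed
qed

lemma P5_feas_of_P3_optimum:
  assumes C1: "0 < C1"
    and feas: "P3_feas x y n N tau M0 w b xi e1 e2 z"
    and opt: "\<forall>w' b' xi' e1' e2' z'. P3_feas x y n N tau M0 w' b' xi' e1' e2' z' \<longrightarrow>
                obj C1 C2 n w xi e1 e2 \<le> obj C1 C2 n w' xi' e1' e2'"
    and r: "norm w \<le> r" and M0: "2 * r * radius + 1 \<le> M0" and M: "2 * r * radius + 1 \<le> M"
    and Sp: "Sp \<subseteq> {i\<in>{n+1..N}. 0 < inner w (x i) + b}"
    and Sn: "Sn \<subseteq> {i\<in>{n+1..N}. inner w (x i) + b < 0}"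
    and s: "s \<in> {n+1..N}" "0 \<le> inner w (x s) + b"
  shows "P5_feas x y n N tau M Sp Sn s w b xi e1 e2 z"
proof (rule P5_feas_of_P3_feas[OF feas Sp Sn s])
  show "\<forall>i\<in>{n+1..N}. \<bar>inner w (x i) + b\<bar> \<le> M"
  proof
    fix i assume "i \<in> {n+1..N}"
    then have "\<bar>inner w (x i) + b\<bar> \<le> 2 * r * radius + 1"
      using P3_optimum_bias_bounded[OF C1 feas opt r M0] by auto
    with M show "\<bar>inner w (x i) + b\<bar> \<le> M" by linarith
  qed
qed

end

theorem lemma5p1:
  fixes x :: "nat \<Rightarrow> real^'d" and y :: "nat \<Rightarrow> real"
    and n N tau :: nat and C1 C2 :: real
    and wb :: "real^'d" and bb :: real and xib :: "nat \<Rightarrow> real" and e1b e2b :: real and zb :: "nat \<Rightarrow> real"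
    and ws :: "real^'d" and bs :: real and xis :: "nat \<Rightarrow> real" and e1s e2s :: real and zs :: "nat \<Rightarrow> real"
    and Sp Sn :: "nat set" and s :: nat
  assumes nN: "n \<le> N"
    and labels: "\<forall>i\<in>{1..n}. y i \<in> {-1, 1}"
    and pos: "\<exists>i\<in>{1..n}. y i = 1" and neg: "\<exists>i\<in>{1..n}. y i = -1"
    and C1: "C1 > 0" and C2: "C2 > 0"
    and tau: "tau \<le> N - n"
    and M0_def: "M0 = 2 * sqrt (2 * (2 * C1 * real (card {i\<in>{1..n}. y i = -1})
                          + C2 * (real (N - n) - real tau))) * Max ((\<lambda>i. norm (x i)) ` {1..N}) + 1"
    and bar_feas: "P3_feas x y n N tau M0 wb bb xib e1b e2b zb"
    and fbar: "fbar = obj C1 C2 n wb xib e1b e2b"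
    and star_feas: "P3_feas x y n N tau M0 ws bs xis e1s e2s zs"
    and star_opt: "\<forall>w b xi e1 e2 z. P3_feas x y n N tau M0 w b xi e1 e2 z \<longrightarrow>
                      obj C1 C2 n ws xis e1s e2s \<le> obj C1 C2 n w xi e1 e2"
    and fstar: "fstar = obj C1 C2 n ws xis e1s e2s"
    and Sp: "Sp \<subseteq> {i\<in>{n+1..N}. inner ws (x i) + bs > 0}"
    and Sn: "Sn \<subseteq> {i\<in>{n+1..N}. inner ws (x i) + bs < 0}"
    and s: "s \<in> {n+1..N} - (Sp \<union> Sn)" and s_neg: "inner wb (x s) + bb < 0"
    and M_def: "M = 2 * sqrt (2 * fbar) * Max ((\<lambda>i. norm (x i)) ` {1..N}) + 1"
  shows "(\<forall>w b xi e1 e2 z. P5_feas x y n N tau M Sp Sn s w b xi e1 e2 z \<longrightarrow>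
            fstar \<le> obj C1 C2 n w xi e1 e2)
       \<and> (\<forall>ft. ((\<exists>w b xi e1 e2 z. P5_feas x y n N tau M Sp Sn s w b xi e1 e2 z
                       \<and> ft = obj C1 C2 n w xi e1 e2)
                 \<and> (\<forall>w b xi e1 e2 z. P5_feas x y n N tau M Sp Sn s w b xi e1 e2 z
                       \<longrightarrow> ft \<le> obj C1 C2 n w xi e1 e2)
                 \<and> fbar < ft)
             \<longrightarrow> inner ws (x s) + bs < 0)"
proof -
  interpret labeled_data x y n N using nN labels pos neg by unfold_locales
  define F0 where "F0 = 2 * C1 * real (card {i\<in>{1..n}. y i = -1}) + C2 * (real (N - n) - real tau)"
  have M0: "M0 = 2 * sqrt (2 * F0) * radius + 1" using M0_def unfolding F0_def radius_def .
  have M: "M = 2 * sqrt (2 * fbar) * radius + 1" using M_def unfolding radius_def .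
  have opt: "\<forall>w b xi e1 e2 z. P3_feas x y n N tau M0 w b xi e1 e2 z \<longrightarrow> fstar \<le> obj C1 C2 n w xi e1 e2"
    using star_opt fstar by simp
  have "0 \<le> F0" unfolding F0_def using C1 C2 tau by simp
  then have fstar_F0: "fstar \<le> F0"
    using M0 radius_nonneg P3_optimum_le_reference_value[OF tau _ opt] unfolding F0_def by simp
  have fstar_fbar: "fstar \<le> fbar" using opt bar_feas fbar by blast
  have bound_mono: "2 * sqrt (2 * fstar) * radius + 1 \<le> 2 * sqrt (2 * F) * radius + 1"
    if "fstar \<le> F" for F
    using that radius_nonneg by (simp add: mult_right_mono)
  have "Sp \<subseteq> {n+1..N}" "Sn \<subseteq> {n+1..N}" "Sp \<inter> Sn = {}" using Sp Sn by force+
  then have part_a: "fstar \<le> obj C1 C2 n w xi e1 e2"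
    if "P5_feas x y n N tau M Sp Sn s w b xi e1 e2 z" for w b xi e1 e2 z
    using that C1 C2 by (intro P3_optimum_le_P5_value[OF _ _ opt fstar_F0 M0[symmetric, THEN eq_refl]]) simp_all
  have "norm ws \<le> sqrt (2 * fstar)"
    using star_feas C1 C2 unfolding fstar P3_feas_def by (intro norm_le_sqrt_obj) auto
  then have star_P5: "P5_feas x y n N tau M Sp Sn s ws bs xis e1s e2s zs" if "0 \<le> inner ws (x s) + bs"
    using that C1 star_feas star_opt bound_mono[OF fstar_F0] bound_mono[OF fstar_fbar] M0 M Sp Sn s
    by (intro P5_feas_of_P3_optimum) auto
  show ?thesis
    using part_a star_P5 fstar fstar_fbar by (fastforce simp: not_less[symmetric])
qed

end
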